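(* For every $\epsilon\in(\tfrac12,1)$ there exists a forecasting competition (as defined in the context), with some number of events $m$ and some number of forecasters $n$, such that $p_0=\frac{2-\epsilon}{n}$ and the competition has no pure Nash equilibrium.
   Context: A forecasting competition with $m$ binary events and $n$ forecasters is the following game. Let $\mathcal{Y}=\{0,1\}^m$, $\mathcal{X}=[0,1]^m$, $Q$ a probability distribution on $\mathcal{Y}$, and $d(x,y)=\|x-y\|_2$. Each forecaster $i\in[n]$ chooses $x_i\in\mathcal{X}$; write $\bm{x}=(x_1,\dots,x_n)$ and $X_{\min}(\bm{x},y)=\arg\min_{x_j\in\bm{x}}\|x_j-y\|_2$. Forecaster $i$'s utility is $u_i(x_i,\bm{x}_{-i})=\mathbb{E}_{y\sim Q}\big[\mathbb{1}[x_i\in X_{\min}(\bm{x},y)]/|X_{\min}(\bm{x},y)|\big]$. Let $p_0=\min_{y\in\{0,1\}^m}Q(y)$. A pure Nash equilibrium is $\bm{x}$ with $u_i(x_i',\bm{x}_{-i})\le u_i(x_i,\bm{x}_{-i})$ for all $i$ and $x_i'\in\mathcal{X}$. *)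

theory Defs
  imports "HOL-Analysis.Analysis"
begin

text \<open>Outcomes y in {0,1}^m and forecasts x in [0,1]^m are represented as functions
  nat \<Rightarrow> real whose coordinates i < m carry the vector and which vanish for i \<ge> m.\<close>

definition Ycube :: "nat \<Rightarrow> (nat \<Rightarrow> real) set" where
  "Ycube m = {y. (\<forall>i<m. y i = 0 \<or> y i = 1) \<and> (\<forall>i. m \<le> i \<longrightarrow> y i = 0)}"

definition Xcube :: "nat \<Rightarrow> (nat \<Rightarrow> real) set" where
  "Xcube m = {x. (\<forall>i<m. 0 \<le> x i \<and> x i \<le> 1) \<and> (\<forall>i. m \<le> i \<longrightarrow> x i = 0)}"

definition dist2 :: "nat \<Rightarrow> (nat \<Rightarrow> real) \<Rightarrow> (nat \<Rightarrow> real) \<Rightarrow> real" where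
  "dist2 m x y = sqrt (\<Sum>i<m. (x i - y i)^2)"

definition is_distr :: "nat \<Rightarrow> ((nat \<Rightarrow> real) \<Rightarrow> real) \<Rightarrow> bool" where
  "is_distr m Q \<longleftrightarrow> (\<forall>y\<in>Ycube m. 0 \<le> Q y) \<and> (\<Sum>y\<in>Ycube m. Q y) = 1"

definition p0 :: "nat \<Rightarrow> ((nat \<Rightarrow> real) \<Rightarrow> real) \<Rightarrow> real" where
  "p0 m Q = Min (Q ` Ycube m)"

definition winners :: "nat \<Rightarrow> nat \<Rightarrow> (nat \<Rightarrow> nat \<Rightarrow> real) \<Rightarrow> (nat \<Rightarrow> real) \<Rightarrow> nat set" where
  "winners m n xs y = {j. j < n \<and> (\<forall>k<n. dist2 m (xs j) y \<le> dist2 m (xs k) y)}"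

definition utility :: "nat \<Rightarrow> nat \<Rightarrow> ((nat \<Rightarrow> real) \<Rightarrow> real) \<Rightarrow> (nat \<Rightarrow> nat \<Rightarrow> real) \<Rightarrow> nat \<Rightarrow> real" where
  "utility m n Q xs i =
     (\<Sum>y\<in>Ycube m. Q y * (if i \<in> winners m n xs y then 1 / real (card (winners m n xs y)) else 0))"

definition valid_profile :: "nat \<Rightarrow> nat \<Rightarrow> (nat \<Rightarrow> nat \<Rightarrow> real) \<Rightarrow> bool" where
  "valid_profile m n xs \<longleftrightarrow> (\<forall>j<n. xs j \<in> Xcube m)"

definition pure_NE :: "nat \<Rightarrow> nat \<Rightarrow> ((nat \<Rightarrow> real) \<Rightarrow> real) \<Rightarrow> (nat \<Rightarrow> nat \<Rightarrow> real) \<Rightarrow> bool" where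
  "pure_NE m n Q xs \<longleftrightarrow> valid_profile m n xs \<and>
     (\<forall>i<n. \<forall>x'\<in>Xcube m. utility m n Q (xs(i := x')) i \<le> utility m n Q xs i)"

end

theory Submission
  imports Defs
begin

text \<open>Take m = 2 and put mass p = (2 - \<epsilon>)/n on the corners (0,0) and (0,1), mass
  x = (5/2 - \<epsilon>)/n on (1,1) and the remaining mass q on (1,0). Since n p > 1, an unoccupied
  corner would pay every forecaster more than the average payoff 1/n after moving there, so in an
  equilibrium every corner is occupied and every forecaster sits on a corner, sharing its mass
  with the others there. Moving to a corner y secures Q(y)/(|K y| + 1); summing over the corners
  gives every forecaster at least 1/(n + 4) > p/2, which leaves exactly one forecaster on each
  light corner and one or two on (1,1). With one, the forecaster on (0,1) gains by moving to
  (1,1), where it also keeps a third of (0,1); with two, a forecaster on (1,1) gains by moving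
  to (1,0).\<close>

lemma dist2_nonneg: "0 \<le> dist2 m a b"
  by (simp add: dist2_def sum_nonneg)

lemma dist2_eq_0_iff: "dist2 m a b = 0 \<longleftrightarrow> (\<forall>i<m. a i = b i)"
  by (auto simp: dist2_def sum_nonneg_eq_0_iff)

lemma dist2_self [simp]: "dist2 m a a = 0"
  by (simp add: dist2_eq_0_iff)

lemma dist2_eq_if_dist2_eq_0:
  assumes "dist2 m a a' = 0"
  shows "dist2 m a b = dist2 m a' b"
  using assms unfolding dist2_eq_0_iff by (simp add: dist2_def)

lemma Ycube_subset_Xcube: "Ycube m \<subseteq> Xcube m"
  by (auto simp: Ycube_def Xcube_def)

lemma zero_in_Ycube: "(\<lambda>_. 0) \<in> Ycube m"
  by (simp add: Ycube_def)

lemma Ycube_eqI: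
  assumes "y \<in> Ycube m" "y' \<in> Ycube m" "\<forall>i<m. y i = y' i"
  shows "y = y'"
proof
  fix i show "y i = y' i"
    using assms by (cases "i < m") (auto simp: Ycube_def)
qed

lemma is_distr_finite: "is_distr m Q \<Longrightarrow> finite (Ycube m)"
  by (metis is_distr_def sum.infinite zero_neq_one)

lemma winners_subset: "winners m n xs y \<subseteq> {..<n}"
  by (auto simp: winners_def)

lemma finite_winners: "finite (winners m n xs y)"
  using finite_subset[OF winners_subset] by blast

lemma winners_nonempty:
  assumes "0 < n"
  shows "winners m n xs y \<noteq> {}"
proof -
  let ?d = "\<lambda>j. dist2 m (xs j) y"
  have "Min (?d ` {..<n}) \<in> ?d ` {..<n}"
    using assms by (intro Min_in) auto
  then obtain j where "j < n" "?d j = Min (?d ` {..<n})"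
    by auto
  then have "j \<in> winners m n xs y"
    by (simp add: winners_def)
  then show ?thesis by blast
qed

lemma card_winners_pos: "0 < n \<Longrightarrow> 0 < card (winners m n xs y)"
  using winners_nonempty finite_winners by (simp add: card_gt_0_iff)

lemma sum_utility:
  assumes "0 < n" "finite (Ycube m)"
  shows "(\<Sum>i<n. utility m n Q xs i) = (\<Sum>y\<in>Ycube m. Q y)"
proof -
  have share: "(\<Sum>i<n. if i \<in> winners m n xs y then 1 / real (card (winners m n xs y)) else 0) = 1" for y
    using winners_nonempty[OF assms(1)] finite_winners[of m n xs y] winners_subset[of m n xs y]
    by (simp add: sum.If_cases Int_absorb1)
  have "(\<Sum>i<n. utility m n Q xs i) = (\<Sum>y\<in>Ycube m. Q y *
      (\<Sum>i<n. if i \<in> winners m n xs y then 1 / real (card (winners m n xs y)) else 0))"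
    unfolding utility_def by (subst sum.swap) (simp add: sum_distrib_left)
  then show ?thesis
    by (simp add: share)
qed

lemma utility_ge_sum:
  assumes "finite (Ycube m)" "\<forall>y\<in>Ycube m. 0 \<le> Q y" "S \<subseteq> Ycube m"
    and "\<forall>y\<in>S. i \<in> winners m n xs y"
  shows "(\<Sum>y\<in>S. Q y / real (card (winners m n xs y))) \<le> utility m n Q xs i"
proof -
  have "(\<Sum>y\<in>S. Q y / real (card (winners m n xs y))) =
      (\<Sum>y\<in>S. Q y * (if i \<in> winners m n xs y then 1 / real (card (winners m n xs y)) else 0))"
    using assms(4) by simp
  also have "\<dots> \<le> utility m n Q xs i"
    unfolding utility_def using assms(1-3) by (intro sum_mono2) auto
  finally show ?thesis .
qed

lemma in_winners_fun_upd:
  assumes "i < n" "\<And>j. j < n \<Longrightarrow> j \<noteq> i \<Longrightarrow> dist2 m z y \<le> dist2 m (xs j) y"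
  shows "i \<in> winners m n (xs(i := z)) y"
  using assms by (auto simp: winners_def)

lemma in_winners_fun_upd_self: "i < n \<Longrightarrow> i \<in> winners m n (xs(i := y)) y"
  by (intro in_winners_fun_upd) (simp_all add: dist2_nonneg)

lemma winners_fun_upd_subset:
  assumes "i < n"
  shows "winners m n (xs(i := z)) y \<subseteq> insert i {j. j < n \<and> dist2 m (xs j) y \<le> dist2 m z y}"
  using assms by (force simp: winners_def)

definition occupants :: "nat \<Rightarrow> nat \<Rightarrow> (nat \<Rightarrow> nat \<Rightarrow> real) \<Rightarrow> (nat \<Rightarrow> real) \<Rightarrow> nat set" where
  "occupants m n xs y = {j. j < n \<and> dist2 m (xs j) y = 0}"

lemma finite_occupants: "finite (occupants m n xs y)"
  by (simp add: occupants_def)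

lemma winners_eq_occupants:
  assumes "occupants m n xs y \<noteq> {}"
  shows "winners m n xs y = occupants m n xs y"
proof -
  obtain j where "j < n" "dist2 m (xs j) y = 0"
    using assms by (auto simp: occupants_def)
  then have "(\<forall>k<n. dist2 m (xs i) y \<le> dist2 m (xs k) y) \<longleftrightarrow> dist2 m (xs i) y = 0" for i
    using dist2_nonneg[of m _ y] by (metis order_antisym)
  then show ?thesis
    by (simp add: winners_def occupants_def)
qed

lemma occupants_disjoint:
  assumes "y \<in> Ycube m" "y' \<in> Ycube m" "y \<noteq> y'"
  shows "occupants m n xs y \<inter> occupants m n xs y' = {}"
  using assms Ycube_eqI[of y m y'] by (auto simp: occupants_def dist2_eq_0_iff)

lemma dist2_occupant: "j \<in> occupants m n xs v \<Longrightarrow> dist2 m (xs j) y = dist2 m v y"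
  by (simp add: occupants_def dist2_eq_if_dist2_eq_0)

lemma card_winners_fun_upd_self:
  assumes "i < n"
  shows "card (winners m n (xs(i := y)) y) \<le> card (occupants m n xs y) + 1"
proof -
  have "dist2 m (xs j) y \<le> 0 \<longleftrightarrow> dist2 m (xs j) y = 0" for j
    using dist2_nonneg[of m "xs j" y] by linarith
  then have "winners m n (xs(i := y)) y \<subseteq> insert i (occupants m n xs y)"
    using winners_fun_upd_subset[OF assms, of m xs y y] by (simp add: occupants_def)
  then have "card (winners m n (xs(i := y)) y) \<le> card (insert i (occupants m n xs y))"
    by (simp add: card_mono finite_occupants)
  also have "\<dots> \<le> card (occupants m n xs y) + 1"
    by (simp add: card_insert_if finite_occupants)
  finally show ?thesis .
qed

lemma sum_card_occupants_le:
  assumes "finite (Ycube m)"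
  shows "(\<Sum>y\<in>Ycube m. card (occupants m n xs y)) \<le> n"
proof -
  have "(\<Sum>y\<in>Ycube m. card (occupants m n xs y)) = card (\<Union>y\<in>Ycube m. occupants m n xs y)"
    using assms occupants_disjoint[of _ m _ n xs]
    by (intro card_UN_disjoint[symmetric]) (auto simp: finite_occupants disjoint_iff)
  also have "\<dots> \<le> card {..<n}"
    by (intro card_mono) (auto simp: occupants_def)
  finally show ?thesis by simp
qed

locale heavy_outcome_equilibrium =
  fixes m n :: nat and Q :: "(nat \<Rightarrow> real) \<Rightarrow> real" and xs :: "nat \<Rightarrow> nat \<Rightarrow> real"
  assumes distr: "is_distr m Q"
    and equilibrium: "pure_NE m n Q xs"
    and heavy: "\<And>y. y \<in> Ycube m \<Longrightarrow> 1 < real n * Q y"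
begin

abbreviation u :: "nat \<Rightarrow> real" where "u \<equiv> utility m n Q xs"

abbreviation K :: "(nat \<Rightarrow> real) \<Rightarrow> nat set" where "K \<equiv> occupants m n xs"

lemma finite_outcomes: "finite (Ycube m)"
  using distr by (rule is_distr_finite)

lemma n_pos: "0 < n"
  using heavy[OF zero_in_Ycube] by (cases n) auto

lemma Q_pos: "y \<in> Ycube m \<Longrightarrow> 0 < Q y"
  using heavy[of y] by (smt (verit) mult_nonneg_nonpos of_nat_0_le_iff)

lemma deviation_gain:
  fixes k :: "(nat \<Rightarrow> real) \<Rightarrow> nat"
  assumes "i < n" "z \<in> Xcube m" "S \<subseteq> Ycube m"
    and "\<And>y. y \<in> S \<Longrightarrow> i \<in> winners m n (xs(i := z)) y \<and> card (winners m n (xs(i := z)) y) \<le> k y"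
  shows "(\<Sum>y\<in>S. Q y / real (k y)) \<le> u i"
proof -
  let ?W = "winners m n (xs(i := z))"
  have "Q y / real (k y) \<le> Q y / real (card (?W y))" if "y \<in> S" for y
  proof -
    have "0 < card (?W y)" "card (?W y) \<le> k y"
      using card_winners_pos[OF n_pos] assms(4)[OF that] by auto
    then show ?thesis
      using Q_pos[of y] assms(3) that by (intro divide_left_mono) auto
  qed
  then have "(\<Sum>y\<in>S. Q y / real (k y)) \<le> (\<Sum>y\<in>S. Q y / real (card (?W y)))"
    by (rule sum_mono)
  also have "\<dots> \<le> utility m n Q (xs(i := z)) i"
    using assms(3,4) Q_pos finite_outcomes by (intro utility_ge_sum) (auto simp: less_imp_le)
  also have "\<dots> \<le> u i"
    using equilibrium assms(1,2) by (simp add: pure_NE_def)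
  finally show ?thesis .
qed

lemma deviation_to_outcome:
  assumes "i < n" "y \<in> Ycube m"
  shows "Q y / (real (card (K y)) + 1) \<le> u i"
  using deviation_gain[OF assms(1) _ _, of y "{y}" "\<lambda>_. card (K y) + 1"] assms(2) Ycube_subset_Xcube
    in_winners_fun_upd_self[OF assms(1)] card_winners_fun_upd_self[OF assms(1)]
  by (auto simp: add.commute)

lemma outcome_occupied:
  assumes "y \<in> Ycube m"
  shows "K y \<noteq> {}"
proof
  assume "K y = {}"
  then have "Q y \<le> u i" if "i < n" for i
    using deviation_to_outcome[OF that assms] by simp
  then have "real n * Q y \<le> (\<Sum>i<n. u i)"
    using sum_mono[of "{..<n}" "\<lambda>_. Q y" u] by simp
  also have "\<dots> = 1"
    using sum_utility[OF n_pos finite_outcomes] distr by (simp add: is_distr_def)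
  finally show False
    using heavy[OF assms] by simp
qed

lemma winners_eq_K: "y \<in> Ycube m \<Longrightarrow> winners m n xs y = K y"
  by (simp add: outcome_occupied winners_eq_occupants)

lemma utility_eq_sum_occupied:
  "u i = (\<Sum>y\<in>Ycube m. if i \<in> K y then Q y / real (card (K y)) else 0)"
  unfolding utility_def by (intro sum.cong) (auto simp: winners_eq_K)

lemma forecaster_occupies:
  assumes "i < n"
  obtains y where "y \<in> Ycube m" "i \<in> K y"
proof (rule ccontr)
  assume "\<not> thesis"
  with that have "u i = 0"
    unfolding utility_eq_sum_occupied by (intro sum.neutral) auto
  moreover have "0 < Q (\<lambda>_. 0) / (real (card (K (\<lambda>_. 0))) + 1)"
    using Q_pos[OF zero_in_Ycube] by simp
  ultimately show False
    using deviation_to_outcome[OF assms zero_in_Ycube] by simp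
qed

lemma utility_occupant:
  assumes "y \<in> Ycube m" "i \<in> K y"
  shows "u i = Q y / real (card (K y))"
proof -
  have "i \<in> K y' \<longleftrightarrow> y' = y" if "y' \<in> Ycube m" for y'
    using occupants_disjoint[OF that assms(1)] assms(2) by blast
  then have "u i = (\<Sum>y'\<in>Ycube m. if y' = y then Q y / real (card (K y)) else 0)"
    unfolding utility_eq_sum_occupied by (intro sum.cong) auto
  then show ?thesis
    using assms(1) finite_outcomes by simp
qed

lemma utility_lower_bound:
  assumes "i < n"
  shows "1 \<le> (real n + real (card (Ycube m))) * u i"
proof -
  have u_pos: "0 < u i"
    using deviation_to_outcome[OF assms zero_in_Ycube] Q_pos[OF zero_in_Ycube]
    by (smt (verit) divide_pos_pos of_nat_0_le_iff)
  have "Q y \<le> (real (card (K y)) + 1) * u i" if "y \<in> Ycube m" for y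
    using deviation_to_outcome[OF assms that] by (simp add: divide_le_eq mult.commute)
  then have "(\<Sum>y\<in>Ycube m. Q y) \<le> (\<Sum>y\<in>Ycube m. (real (card (K y)) + 1) * u i)"
    by (rule sum_mono)
  also have "\<dots> = (real (\<Sum>y\<in>Ycube m. card (K y)) + real (card (Ycube m))) * u i"
    by (simp add: sum_distrib_right[symmetric] sum.distrib)
  also have "\<dots> \<le> (real n + real (card (Ycube m))) * u i"
    using sum_card_occupants_le[OF finite_outcomes, of n xs] u_pos
    by (intro mult_right_mono) (simp_all flip: of_nat_sum)
  finally show ?thesis
    using distr by (simp add: is_distr_def)
qed

lemma card_occupants_le:
  assumes "y \<in> Ycube m"
  shows "real (card (K y)) \<le> (real n + real (card (Ycube m))) * Q y"
proof -
  obtain i where i: "i \<in> K y"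
    using outcome_occupied[OF assms] by blast
  then have "i < n"
    by (simp add: occupants_def)
  have "0 < card (K y)"
    using i finite_occupants card_gt_0_iff by blast
  have "1 \<le> (real n + real (card (Ycube m))) * (Q y / real (card (K y)))"
    using utility_lower_bound[OF \<open>i < n\<close>] utility_occupant[OF assms i] by simp
  then show ?thesis
    using \<open>0 < card (K y)\<close> by (simp add: field_simps)
qed

end

definition corner :: "real \<Rightarrow> real \<Rightarrow> nat \<Rightarrow> real" where
  "corner a b = (\<lambda>i. if i = 0 then a else if i = 1 then b else 0)"

lemma corner_apply [simp]: "corner a b 0 = a" "corner a b (Suc 0) = b"
  by (simp_all add: corner_def)

lemma corner_eq_iff [simp]: "corner a b = corner a' b' \<longleftrightarrow> a = a' \<and> b = b'"
  by (metis corner_apply)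

lemma dist2_corners [simp]: "dist2 2 (corner a b) (corner a' b') = sqrt ((a - a')^2 + (b - b')^2)"
  by (simp add: dist2_def numeral_2_eq_2 lessThan_Suc)

lemma Ycube_2: "Ycube 2 = {corner 0 0, corner 1 0, corner 0 1, corner 1 1}"
proof (intro equalityI subsetI)
  fix y assume y: "y \<in> Ycube 2"
  then have "y = corner (y 0) (y 1)"
    by (intro Ycube_eqI[of _ 2]) (auto simp: Ycube_def corner_def less_2_cases_iff)
  moreover have "y 0 \<in> {0, 1}" "y 1 \<in> {0, 1}"
    using y by (auto simp: Ycube_def)
  ultimately show "y \<in> {corner 0 0, corner 1 0, corner 0 1, corner 1 1}"
    by auto
qed (auto simp: Ycube_def corner_def less_2_cases_iff)

lemma card_Ycube_2: "card (Ycube 2) = 4"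
  by (simp add: Ycube_2)

definition square_distr :: "real \<Rightarrow> real \<Rightarrow> real \<Rightarrow> (nat \<Rightarrow> real) \<Rightarrow> real" where
  "square_distr p q x y = (if y = corner 1 0 then q else if y = corner 1 1 then x else p)"

lemma square_distr_corners [simp]:
  "square_distr p q x (corner 0 0) = p" "square_distr p q x (corner 1 0) = q"
  "square_distr p q x (corner 0 1) = p" "square_distr p q x (corner 1 1) = x"
  by (simp_all add: square_distr_def)

lemma is_distr_square_distr:
  assumes "0 \<le> p" "0 \<le> q" "0 \<le> x" "2 * p + q + x = 1"
  shows "is_distr 2 (square_distr p q x)"
  using assms by (simp add: is_distr_def Ycube_2)

lemma p0_square_distr:
  assumes "p \<le> q" "p \<le> x"
  shows "p0 2 (square_distr p q x) = p"
  using assms by (simp add: p0_def Ycube_2 min_def)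

locale square_equilibrium =
  fixes n :: nat and p q x :: real and xs :: "nat \<Rightarrow> nat \<Rightarrow> real"
  assumes p_pos: "0 < p" and p_le_q: "p \<le> q" and total: "2 * p + q + x = 1"
    and heavy_p: "1 < real n * p"
    and small_p: "p * (real n + 4) < 2"
    and x_bounds: "4 * p < 3 * x" "2 * x < 3 * p"
    and q_large: "(real n - 3) * x < 2 * q"
    and square_NE: "pure_NE 2 n (square_distr p q x) xs"

sublocale square_equilibrium \<subseteq> heavy_outcome_equilibrium 2 n "square_distr p q x" xs
proof
  have "p \<le> square_distr p q x y" if "y \<in> Ycube 2" for y
    using that p_le_q x_bounds by (auto simp: Ycube_2)
  then show "1 < real n * square_distr p q x y" if "y \<in> Ycube 2" for y
    using heavy_p that by (smt (verit) mult_left_mono of_nat_0_le_iff)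
qed (use p_pos p_le_q x_bounds total is_distr_square_distr square_NE in auto)

context square_equilibrium
begin

lemma card_K_light_corner:
  assumes "y \<in> {corner 0 0, corner 0 1}"
  shows "card (K y) = 1"
proof -
  have y: "y \<in> Ycube 2"
    using assms by (auto simp: Ycube_2)
  then have "real (card (K y)) < 2"
    using card_occupants_le[of y] small_p assms by (auto simp: card_Ycube_2 mult.commute)
  moreover have "0 < card (K y)"
    using outcome_occupied[OF y] finite_occupants card_gt_0_iff by blast
  ultimately show ?thesis
    by linarith
qed

lemma card_K_11: "card (K (corner 1 1)) \<in> {1, 2}"
proof -
  have "real (card (K (corner 1 1))) \<le> (real n + 4) * x"
    using card_occupants_le[of "corner 1 1"] by (simp add: Ycube_2 card_Ycube_2)
  also have "\<dots> \<le> (real n + 4) * (3 / 2 * p)"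
    using x_bounds by (intro mult_left_mono) auto
  also have "\<dots> < 3"
    using small_p by (simp add: algebra_simps)
  finally have "card (K (corner 1 1)) < 3"
    by simp
  moreover have "0 < card (K (corner 1 1))"
    using outcome_occupied[of "corner 1 1"] finite_occupants card_gt_0_iff by (auto simp: Ycube_2)
  ultimately show ?thesis
    by auto
qed

lemma dist2_other_forecaster_01:
  assumes "K (corner 0 1) = {i}" "j < n" "j \<noteq> i"
  shows "1 \<le> dist2 2 (xs j) (corner 0 1)"
    and "dist2 2 (xs j) (corner 0 1) \<le> 1 \<Longrightarrow> j \<in> K (corner 0 0) \<union> K (corner 1 1)"
proof -
  obtain v where v: "v \<in> Ycube 2" "j \<in> K v"
    using forecaster_occupies[OF assms(2)] by blast
  have "v \<noteq> corner 0 1"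
    using v(2) assms(1,3) by auto
  then consider "v = corner 0 0" | "v = corner 1 0" | "v = corner 1 1"
    using v(1) by (auto simp: Ycube_2)
  then have "1 \<le> dist2 2 v (corner 0 1) \<and> (dist2 2 v (corner 0 1) \<le> 1 \<longrightarrow> v \<noteq> corner 1 0)"
    by cases simp_all
  moreover have "dist2 2 (xs j) (corner 0 1) = dist2 2 v (corner 0 1)"
    using v(2) by (rule dist2_occupant)
  ultimately show "1 \<le> dist2 2 (xs j) (corner 0 1)"
    and "dist2 2 (xs j) (corner 0 1) \<le> 1 \<Longrightarrow> j \<in> K (corner 0 0) \<union> K (corner 1 1)"
    using v \<open>v \<noteq> corner 0 1\<close> by (auto simp: Ycube_2)
qed

lemma winners_01_after_move_to_11:
  assumes "K (corner 0 1) = {i}"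
  defines "W \<equiv> winners 2 n (xs(i := corner 1 1)) (corner 0 1)"
  shows "i \<in> W" and "card W \<le> card (K (corner 0 0)) + card (K (corner 1 1)) + 1"
proof -
  have i: "i < n"
    using assms(1) by (auto simp: occupants_def)
  show "i \<in> W"
    unfolding W_def using dist2_other_forecaster_01[OF assms(1)] i
    by (intro in_winners_fun_upd) simp_all
  have "W \<subseteq> insert i (K (corner 0 0) \<union> K (corner 1 1))"
    unfolding W_def using winners_fun_upd_subset[OF i, of 2 xs "corner 1 1" "corner 0 1"]
      dist2_other_forecaster_01(2)[OF assms(1)] by auto
  then have "card W \<le> card (insert i (K (corner 0 0) \<union> K (corner 1 1)))"
    by (simp add: card_mono finite_occupants)
  also have "\<dots> \<le> card (K (corner 0 0)) + card (K (corner 1 1)) + 1"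
    using card_Un_le[of "K (corner 0 0)" "K (corner 1 1)"] by (simp add: card_insert_if finite_occupants)
  finally show "card W \<le> card (K (corner 0 0)) + card (K (corner 1 1)) + 1" .
qed

lemma card_K_11_ne_1: "card (K (corner 1 1)) \<noteq> 1"
proof
  assume K11: "card (K (corner 1 1)) = 1"
  obtain i where K01: "K (corner 0 1) = {i}"
    using card_K_light_corner[of "corner 0 1"] card_1_singletonE by auto
  then have i: "i < n"
    by (auto simp: occupants_def)
  let ?W = "winners 2 n (xs(i := corner 1 1))"
  have "i \<in> ?W (corner 0 1)" "card (?W (corner 0 1)) \<le> 3"
    using winners_01_after_move_to_11[OF K01] K11 card_K_light_corner[of "corner 0 0"] by simp_all
  moreover have "i \<in> ?W (corner 1 1)" "card (?W (corner 1 1)) \<le> 2"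
    using in_winners_fun_upd_self[OF i] card_winners_fun_upd_self[OF i, of 2 xs "corner 1 1"] K11
    by simp_all
  ultimately have "(\<Sum>y\<in>{corner 0 1, corner 1 1}. square_distr p q x y /
      real (if y = corner 0 1 then 3 else 2)) \<le> u i"
    by (intro deviation_gain[OF i]) (auto simp: Ycube_2 Ycube_subset_Xcube[THEN subsetD])
  then have "p / 3 + x / 2 \<le> u i"
    by simp
  moreover have "u i = p"
    using utility_occupant[of "corner 0 1" i] K01 by (simp add: Ycube_2)
  ultimately show False
    using x_bounds by linarith
qed

lemma card_K_11_ne_2: "card (K (corner 1 1)) \<noteq> 2"
proof
  assume K11: "card (K (corner 1 1)) = 2"
  then have "K (corner 1 1) \<noteq> {}"
    by auto
  then obtain j where j: "j \<in> K (corner 1 1)"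
    by blast
  then have "j < n"
    by (simp add: occupants_def)
  have "card (K (corner 0 0)) + card (K (corner 1 0)) + card (K (corner 0 1)) + card (K (corner 1 1)) \<le> n"
    using sum_card_occupants_le[OF finite_outcomes, of n xs] by (simp add: Ycube_2 add.assoc)
  then have room: "real (card (K (corner 1 0))) + 1 \<le> real n - 3"
    using K11 card_K_light_corner[of "corner 0 0"] card_K_light_corner[of "corner 0 1"] by simp
  have "u j = x / 2"
    using utility_occupant[OF _ j] K11 by (simp add: Ycube_2)
  moreover have "q / (real (card (K (corner 1 0))) + 1) \<le> u j"
    using deviation_to_outcome[OF \<open>j < n\<close>, of "corner 1 0"] by (simp add: Ycube_2)
  ultimately have "q / (real (card (K (corner 1 0))) + 1) \<le> x / 2"
    by linarith
  then have "2 * q \<le> x * (real (card (K (corner 1 0))) + 1)"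
    by (simp add: divide_le_eq mult.commute)
  also have "\<dots> \<le> x * (real n - 3)"
    using room p_pos x_bounds by (intro mult_left_mono) auto
  finally show False
    using q_large by (simp add: mult.commute)
qed

end

theorem square_no_pure_NE:
  assumes "0 < p" "p \<le> q" "2 * p + q + x = 1" "1 < real n * p" "p * (real n + 4) < 2"
    and "4 * p < 3 * x" "2 * x < 3 * p" "(real n - 3) * x < 2 * q"
  shows "\<not> pure_NE 2 n (square_distr p q x) xs"
proof
  assume "pure_NE 2 n (square_distr p q x) xs"
  then interpret square_equilibrium n p q x xs
    using assms by unfold_locales
  show False
    using card_K_11 card_K_11_ne_1 card_K_11_ne_2 by auto
qed

text \<open>With c = 2 - \<epsilon>, the ratio x/p = 1 + 1/(2c) lies strictly between 4/3 and 3/2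
  exactly because 1 < c < 3/2.\<close>

lemma square_parameters:
  fixes \<epsilon> N :: real
  assumes "1/2 < \<epsilon>" "\<epsilon> < 1" "12 \<le> (2 * \<epsilon> - 1) * N"
  defines "p \<equiv> (2 - \<epsilon>) / N" and "x \<equiv> (5/2 - \<epsilon>) / N"
  defines "q \<equiv> 1 - 2 * p - x"
  shows "0 < p" "p \<le> q" "2 * p + q + x = 1" "1 < N * p" "p * (N + 4) < 2"
    and "4 * p < 3 * x" "2 * x < 3 * p" "(N - 3) * x < 2 * q"
proof -
  have "0 < N"
    using zero_less_mult_pos[of "2 * \<epsilon> - 1" N] assms(1,3) by linarith
  then have "(2 * \<epsilon> - 1) * N \<le> 1 * N"
    using assms(2) by (intro mult_right_mono) auto
  then have "12 \<le> N"
    using assms(3) by linarith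
  have "6 + N / 2 \<le> \<epsilon> * N"
    using assms(3) by (simp add: algebra_simps)
  show "0 < p" "1 < N * p" "4 * p < 3 * x" "2 * x < 3 * p"
    using assms(1,2) \<open>0 < N\<close> by (simp_all add: p_def x_def field_simps)
  have "3 * p + x = (17/2 - 4 * \<epsilon>) / N"
    "p * (N + 4) = (2 - \<epsilon>) * (N + 4) / N"
    "(N - 1) * x + 4 * p = ((N - 1) * (5/2 - \<epsilon>) + 4 * (2 - \<epsilon>)) / N"
    using \<open>0 < N\<close> by (simp_all add: p_def x_def field_simps)
  moreover have "17/2 - 4 * \<epsilon> \<le> N" "(2 - \<epsilon>) * (N + 4) < 2 * N"
    using assms(1,2) \<open>12 \<le> N\<close> \<open>6 + N / 2 \<le> \<epsilon> * N\<close> by (auto simp: algebra_simps)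
  moreover have "(N - 1) * (5/2 - \<epsilon>) + 4 * (2 - \<epsilon>) = 5/2 * N + 11/2 - 3 * \<epsilon> - \<epsilon> * N"
    by (simp add: field_simps)
  then have "(N - 1) * (5/2 - \<epsilon>) + 4 * (2 - \<epsilon>) < 2 * N"
    using assms(1) \<open>6 + N / 2 \<le> \<epsilon> * N\<close> by linarith
  ultimately have "3 * p + x \<le> 1" "p * (N + 4) < 2" "(N - 1) * x + 4 * p < 2"
    using \<open>0 < N\<close> by (simp_all add: divide_le_eq divide_less_eq)
  then show "p \<le> q" "p * (N + 4) < 2" "(N - 3) * x < 2 * q"
    by (simp_all add: q_def algebra_simps)
  show "2 * p + q + x = 1"
    by (simp add: q_def)
qed

theorem lemma4:
  fixes \<epsilon> :: real
  assumes "1/2 < \<epsilon>" and "\<epsilon> < 1"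
  shows "\<exists>(m::nat) (n::nat) Q. 1 \<le> m \<and> 1 \<le> n \<and> is_distr m Q \<and>
           p0 m Q = (2 - \<epsilon>) / real n \<and> \<not> (\<exists>xs. pure_NE m n Q xs)"
proof -
  define n where "n = nat \<lceil>12 / (2 * \<epsilon> - 1)\<rceil>"
  have "12 / (2 * \<epsilon> - 1) \<le> real n"
    unfolding n_def by (rule real_nat_ceiling_ge)
  then have "12 \<le> (2 * \<epsilon> - 1) * real n"
    using assms by (simp add: divide_le_eq mult.commute)
  define p where "p = (2 - \<epsilon>) / real n"
  define x where "x = (5/2 - \<epsilon>) / real n"
  define q where "q = 1 - 2 * p - x"
  note params = square_parameters[OF assms \<open>12 \<le> (2 * \<epsilon> - 1) * real n\<close>,
    folded p_def x_def, folded q_def]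
  have "p0 2 (square_distr p q x) = p"
    using params(1,2,6) by (intro p0_square_distr) auto
  then have "p0 2 (square_distr p q x) = (2 - \<epsilon>) / real n"
    by (simp add: p_def)
  moreover have "1 \<le> n"
    using params(4) by (cases n) auto
  moreover have "is_distr 2 (square_distr p q x)"
    using params by (intro is_distr_square_distr) auto
  moreover have "\<not> (\<exists>xs. pure_NE 2 n (square_distr p q x) xs)"
    using square_no_pure_NE[OF params] by blast
  ultimately show ?thesis
    by (intro exI[of _ 2] exI[of _ n] exI[of _ "square_distr p q x"]) auto
qed

end
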